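(* Let $G$ be a graph of order $n\ge 3$, let $\mathbf{x}=(x_1,\ldots,x_n)$ be a nonnegative unit eigenvector of $Q(G)$ for the eigenvalue $q(G)$, and let $u$ be a vertex with $x_u=\min\{x_1,\ldots,x_n\}$. Then \[ \frac{q(G-u)}{n-2}\ge \frac{q(G)}{n-1}\left(1+\frac{1-nx_u^2}{(n-2)(1-x_u^2)}\right)-\frac{1-nx_u^2}{(n-2)(1-x_u^2)}. \]
   Context: All graphs are finite and simple. $Q(G)=D(G)+A(G)$ is the signless Laplacian ($D(G)$ the diagonal degree matrix, $A(G)$ the adjacency matrix) and $q(G)$ its largest eigenvalue. "Unit" means Euclidean norm $1$; the coordinate $x_v$ corresponds to vertex $v$. $G-u$ denotes the graph obtained by deleting $u$ and all incident edges. *)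

theory Defs
  imports Complex_Main
begin

definition simple_graph :: "'a set \<Rightarrow> ('a \<Rightarrow> 'a \<Rightarrow> bool) \<Rightarrow> bool" where
  "simple_graph V E \<longleftrightarrow> finite V \<and> (\<forall>u v. E u v \<longrightarrow> u \<in> V \<and> v \<in> V)
     \<and> (\<forall>u v. E u v \<longrightarrow> E v u) \<and> (\<forall>v. \<not> E v v)"

definition degree :: "'a set \<Rightarrow> ('a \<Rightarrow> 'a \<Rightarrow> bool) \<Rightarrow> 'a \<Rightarrow> nat" where
  "degree V E v = card {w \<in> V. E v w}"

definition signless_laplacian :: "'a set \<Rightarrow> ('a \<Rightarrow> 'a \<Rightarrow> bool) \<Rightarrow> 'a \<Rightarrow> 'a \<Rightarrow> real" where
  "signless_laplacian V E u v =
     (if u = v then real (degree V E u) else 0) + (if E u v then 1 else 0)"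

definition is_eigenvalue :: "'a set \<Rightarrow> ('a \<Rightarrow> 'a \<Rightarrow> real) \<Rightarrow> real \<Rightarrow> bool" where
  "is_eigenvalue V M lam \<longleftrightarrow>
     (\<exists>x. (\<exists>v\<in>V. x v \<noteq> 0) \<and> (\<forall>v\<in>V. (\<Sum>w\<in>V. M v w * x w) = lam * x v))"

definition q_index :: "'a set \<Rightarrow> ('a \<Rightarrow> 'a \<Rightarrow> bool) \<Rightarrow> real" where
  "q_index V E = Max {lam. is_eigenvalue V (signless_laplacian V E) lam}"

definition del_vertex_V :: "'a set \<Rightarrow> 'a \<Rightarrow> 'a set" where
  "del_vertex_V V u = V - {u}"

definition del_vertex_E :: "('a \<Rightarrow> 'a \<Rightarrow> bool) \<Rightarrow> 'a \<Rightarrow> 'a \<Rightarrow> 'a \<Rightarrow> bool" where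
  "del_vertex_E E u a b \<longleftrightarrow> E a b \<and> a \<noteq> u \<and> b \<noteq> u"

end

theory Submission
  imports Defs "HOL-Analysis.Function_Topology" "Jordan_Normal_Form.Spectral_Radius"
begin

text \<open>Restrict the eigenvector \<open>x\<close> to \<open>V - {u}\<close>. By the Rayleigh principle its quadratic form for
  \<open>Q(G - u)\<close> is at most \<open>q(G - u) (1 - x\<^sub>u\<^sup>2)\<close>, and it differs from \<open>x\<^sup>T Q(G) x = q(G)\<close> exactly by the
  terms \<open>(x\<^sub>u + x\<^sub>w)\<^sup>2\<close> of the edges \<open>uw\<close>. The eigen-equation at \<open>u\<close>, \<open>d(u) x\<^sub>u + \<Sum>\<^sub>w\<^sub>~\<^sub>u x\<^sub>w = q(G) x\<^sub>u\<close>,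
  together with \<open>x\<^sub>v\<^sup>2 \<ge> x\<^sub>u\<^sup>2\<close> at the non-neighbours of \<open>u\<close>, bounds these terms by
  \<open>2 q(G) x\<^sub>u\<^sup>2 + 1 - n x\<^sub>u\<^sup>2\<close>. Hence \<open>q(G - u) (1 - x\<^sub>u\<^sup>2) \<ge> q(G) (1 - 2 x\<^sub>u\<^sup>2) - 1 + n x\<^sub>u\<^sup>2\<close>, which
  rearranges to the claim. The Rayleigh principle is obtained from a maximiser of the
  quadratic form on the unit sphere, which is an eigenvector by a first-order variation.\<close>

definition quad_form :: "'a set \<Rightarrow> ('a \<Rightarrow> 'a \<Rightarrow> real) \<Rightarrow> ('a \<Rightarrow> real) \<Rightarrow> real" where
  "quad_form W M z = (\<Sum>v\<in>W. \<Sum>w\<in>W. M v w * z v * z w)"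

lemma quad_form_eigenvector:
  assumes "\<forall>v\<in>W. (\<Sum>w\<in>W. M v w * z w) = lam * z v"
  shows "quad_form W M z = lam * (\<Sum>v\<in>W. (z v)\<^sup>2)"
proof -
  have "quad_form W M z = (\<Sum>v\<in>W. z v * (\<Sum>w\<in>W. M v w * z w))"
    unfolding quad_form_def by (simp add: sum_distrib_left mult_ac)
  also have "\<dots> = (\<Sum>v\<in>W. lam * (z v)\<^sup>2)"
    using assms by (intro sum.cong refl) (simp add: power2_eq_square)
  finally show ?thesis
    by (simp add: sum_distrib_left)
qed

lemma finite_eigenvalues:
  assumes fin: "finite W"
  shows "finite {lam. is_eigenvalue W M lam}"
proof -
  define n where "n = card W"
  \<comment> \<open>Enumerating \<open>W\<close> turns \<open>M\<close> into a square matrix whose finite spectrum contains every eigenvalue.\<close>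
  obtain f where f: "bij_betw f {0..<n} W"
    using ex_bij_betw_nat_finite[OF fin] n_def by blast
  have f_in: "f i \<in> W" if "i < n" for i
    using f that unfolding bij_betw_def by auto
  define A where "A = mat n n (\<lambda>(i, j). M (f i) (f j))"
  have A: "A \<in> carrier_mat n n"
    unfolding A_def by simp
  have "{lam. is_eigenvalue W M lam} \<subseteq> spectrum A"
  proof
    fix lam
    assume "lam \<in> {lam. is_eigenvalue W M lam}"
    then obtain x where nonzero: "\<exists>v\<in>W. x v \<noteq> 0"
      and eigen: "\<forall>v\<in>W. (\<Sum>w\<in>W. M v w * x w) = lam * x v"
      unfolding is_eigenvalue_def by blast
    define v where "v = vec n (\<lambda>i. x (f i))"
    obtain i where "i < n" "x (f i) \<noteq> 0"
      using nonzero f unfolding bij_betw_def by auto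
    then have "v $ i \<noteq> 0\<^sub>v n $ i"
      unfolding v_def by simp
    then have "v \<noteq> 0\<^sub>v n"
      by metis
    moreover have "A *\<^sub>v v = lam \<cdot>\<^sub>v v"
    proof (rule eq_vecI)
      fix i
      assume "i < dim_vec (lam \<cdot>\<^sub>v v)"
      then have i: "i < n"
        unfolding v_def by simp
      have "(A *\<^sub>v v) $ i = (\<Sum>j\<in>{0..<n}. M (f i) (f j) * x (f j))"
        using i unfolding A_def v_def by (simp add: scalar_prod_def)
      also have "\<dots> = (\<Sum>w\<in>W. M (f i) w * x w)"
        by (rule sum.reindex_bij_betw[OF f])
      also have "\<dots> = lam * x (f i)"
        using eigen f_in[OF i] by blast
      finally show "(A *\<^sub>v v) $ i = (lam \<cdot>\<^sub>v v) $ i"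
        using i unfolding v_def by simp
    qed (simp add: A_def v_def)
    ultimately have "eigenvector A v lam"
      unfolding eigenvector_def using A unfolding v_def by simp
    then show "lam \<in> spectrum A"
      unfolding spectrum_def eigenvalue_def by blast
  qed
  then show ?thesis
    using card_finite_spectrum(1)[OF A] finite_subset by blast
qed

lemma quad_form_attains_max_on_sphere:
  assumes fin: "finite W" and ne: "W \<noteq> {}"
  obtains z where "(\<Sum>v\<in>W. (z v)\<^sup>2) = 1"
    and "\<And>y. (\<Sum>v\<in>W. (y v)\<^sup>2) = 1 \<Longrightarrow> quad_form W M y \<le> quad_form W M z"
proof -
  define X where "X = product_topology (\<lambda>_. euclideanreal) W"
  define sqnorm where "sqnorm y = (\<Sum>v\<in>W. (y v)\<^sup>2)" for y :: "'a \<Rightarrow> real"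
  define K where "K = {z \<in> topspace X. sqnorm z \<in> {1}} \<inter> PiE W (\<lambda>_. {-1..1})"
  have proj: "continuous_map X euclideanreal (\<lambda>z. z v)" if "v \<in> W" for v
    unfolding X_def using continuous_map_product_projection[OF that, of "\<lambda>_. euclideanreal"] by simp
  have "continuous_map X euclideanreal sqnorm"
    unfolding sqnorm_def using fin by (intro continuous_intros proj)
  then have "closedin X {z \<in> topspace X. sqnorm z \<in> {1}}"
    by (rule closedin_continuous_map_preimage) simp
  moreover have "compactin X (PiE W (\<lambda>_. {-1..1}))"
    unfolding X_def by (simp add: compactin_PiE)
  ultimately have "compactin X K"
    unfolding K_def using closed_Int_compactin by blast
  moreover have "continuous_map X euclideanreal (quad_form W M)"
    unfolding quad_form_def using fin by (intro continuous_intros proj)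
  ultimately have "compact (quad_form W M ` K)"
    using image_compactin by fastforce
  \<comment> \<open>Points of the product space are extensional, so unit vectors enter \<open>K\<close> only after restriction.\<close>
  have sphere_in_K: "restrict y W \<in> K" if "sqnorm y = 1" for y
  proof -
    have "(y v)\<^sup>2 \<le> 1\<^sup>2" if "v \<in> W" for v
      using member_le_sum[OF that _ fin, of "\<lambda>v. (y v)\<^sup>2"] \<open>sqnorm y = 1\<close>
      unfolding sqnorm_def by simp
    then have "\<bar>y v\<bar> \<le> 1" if "v \<in> W" for v
      using that abs_le_square_iff[of "y v" 1] by simp
    moreover have "sqnorm (restrict y W) = 1"
      using \<open>sqnorm y = 1\<close> unfolding sqnorm_def by (simp cong: sum.cong)
    ultimately show ?thesis
      unfolding K_def X_def by (auto simp: PiE_iff abs_le_iff)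
  qed
  obtain w0 where "w0 \<in> W"
    using ne by blast
  then have "sqnorm (\<lambda>v. if v = w0 then 1 else 0) = 1"
    unfolding sqnorm_def using fin by (simp add: if_distrib[of "\<lambda>t. t\<^sup>2"] cong: if_cong)
  then have "quad_form W M ` K \<noteq> {}"
    using sphere_in_K by blast
  from compact_attains_sup[OF \<open>compact (quad_form W M ` K)\<close> this] obtain z where z: "z \<in> K"
    and z_max: "\<forall>y\<in>K. quad_form W M y \<le> quad_form W M z"
    by blast
  show thesis
  proof (rule that)
    show "(\<Sum>v\<in>W. (z v)\<^sup>2) = 1"
      using z unfolding K_def sqnorm_def by simp
  next
    fix y :: "'a \<Rightarrow> real"
    assume "(\<Sum>v\<in>W. (y v)\<^sup>2) = 1"
    then have "quad_form W M (restrict y W) \<le> quad_form W M z"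
      using z_max sphere_in_K unfolding sqnorm_def by blast
    then show "quad_form W M y \<le> quad_form W M z"
      unfolding quad_form_def by (simp cong: sum.cong)
  qed
qed

lemma linear_coeff_eq_0_if_nonpos:
  fixes B C :: real
  assumes "\<And>t. B * t + C * t\<^sup>2 \<le> 0"
  shows "B = 0"
proof (rule ccontr)
  assume "B \<noteq> 0"
  define t where "t = B / (\<bar>C\<bar> + 1)"
  have "B = (\<bar>C\<bar> + 1) * t"
    unfolding t_def by (simp add: add_pos_nonneg)
  moreover have "- \<bar>C\<bar> * t\<^sup>2 \<le> C * t\<^sup>2"
    by (intro mult_right_mono) auto
  moreover have "t\<^sup>2 > 0"
    using \<open>B \<noteq> 0\<close> unfolding t_def by (simp add: add_pos_nonneg)
  ultimately have "B * t + C * t\<^sup>2 > 0"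
    by (simp add: algebra_simps power2_eq_square)
  with assms show False
    by (meson not_less)
qed

lemma quad_form_add:
  "quad_form W M (\<lambda>w. a w + t * b w) = quad_form W M a
     + t * (\<Sum>v\<in>W. b v * (\<Sum>w\<in>W. (M v w + M w v) * a w)) + t\<^sup>2 * quad_form W M b"
proof -
  have "(\<Sum>v\<in>W. b v * (\<Sum>w\<in>W. (M v w + M w v) * a w))
      = (\<Sum>v\<in>W. \<Sum>w\<in>W. M v w * b v * a w) + (\<Sum>v\<in>W. \<Sum>w\<in>W. M w v * b v * a w)"
    by (simp add: sum_distrib_left sum.distrib algebra_simps)
  also have "(\<Sum>v\<in>W. \<Sum>w\<in>W. M w v * b v * a w) = (\<Sum>v\<in>W. \<Sum>w\<in>W. M v w * a v * b w)"
    by (subst sum.swap) (simp add: mult_ac)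
  finally show ?thesis
    unfolding quad_form_def by (simp add: sum.distrib sum_distrib_left algebra_simps power2_eq_square)
qed

lemma quad_form_add_unit_vector:
  assumes "finite W" and "v \<in> W"
  shows "quad_form W M (\<lambda>w. z w + t * (if w = v then 1 else 0))
    = quad_form W M z + t * (\<Sum>w\<in>W. (M v w + M w v) * z w) + t\<^sup>2 * M v v"
  using assms unfolding quad_form_add
  by (simp add: quad_form_def if_distrib[of "(*) _"] if_distrib[of "\<lambda>x. x * _"] cong: if_cong)

lemma sum_squares_add_unit_vector:
  fixes z :: "'a \<Rightarrow> real"
  assumes "finite W" and "v \<in> W"
  shows "(\<Sum>w\<in>W. (z w + t * (if w = v then 1 else 0))\<^sup>2) = (\<Sum>w\<in>W. (z w)\<^sup>2) + 2 * t * z v + t\<^sup>2"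
  using assms
  by (simp add: power2_sum sum.distrib if_distrib[of "(*) _"] if_distrib[of "\<lambda>x. x\<^sup>2"]
      flip: sum_distrib_left cong: if_cong)

lemma quad_form_maximiser_eigenvector:
  assumes fin: "finite W" and v: "v \<in> W"
    and sym: "\<And>v w. v \<in> W \<Longrightarrow> w \<in> W \<Longrightarrow> M v w = M w v"
    and bound: "\<And>y. quad_form W M y \<le> lam * (\<Sum>w\<in>W. (y w)\<^sup>2)"
    and attained: "quad_form W M z = lam * (\<Sum>w\<in>W. (z w)\<^sup>2)"
  shows "(\<Sum>w\<in>W. M v w * z w) = lam * z v"
proof -
  define S where "S = (\<Sum>w\<in>W. M v w * z w)"
  have "(\<Sum>w\<in>W. (M v w + M w v) * z w) = 2 * S"
    unfolding S_def sum_distrib_left using sym v by (intro sum.cong) auto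
  then have "2 * (S - lam * z v) * t + (M v v - lam) * t\<^sup>2 \<le> 0" for t
    using bound[of "\<lambda>w. z w + t * (if w = v then 1 else 0)"] attained
    unfolding quad_form_add_unit_vector[OF fin v] sum_squares_add_unit_vector[OF fin v]
    by (simp add: algebra_simps)
  then have "2 * (S - lam * z v) = 0"
    by (rule linear_coeff_eq_0_if_nonpos)
  then show ?thesis
    unfolding S_def by simp
qed

lemma symmetric_quad_form_le_eigenvalue:
  assumes fin: "finite W" and ne: "W \<noteq> {}"
    and sym: "\<And>v w. v \<in> W \<Longrightarrow> w \<in> W \<Longrightarrow> M v w = M w v"
  obtains lam where "is_eigenvalue W M lam"
    and "\<And>y. quad_form W M y \<le> lam * (\<Sum>v\<in>W. (y v)\<^sup>2)"
proof -
  obtain z where unit: "(\<Sum>v\<in>W. (z v)\<^sup>2) = 1"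
    and z_max: "\<And>y. (\<Sum>v\<in>W. (y v)\<^sup>2) = 1 \<Longrightarrow> quad_form W M y \<le> quad_form W M z"
    using quad_form_attains_max_on_sphere[OF fin ne] by blast
  define lam where "lam = quad_form W M z"
  have bound: "quad_form W M y \<le> lam * (\<Sum>v\<in>W. (y v)\<^sup>2)" for y
  proof (cases "(\<Sum>v\<in>W. (y v)\<^sup>2) = 0")
    case True
    then have "\<forall>v\<in>W. y v = 0"
      using fin by (simp add: sum_nonneg_eq_0_iff)
    then show ?thesis
      by (simp add: quad_form_def)
  next
    case False
    then have pos: "(\<Sum>v\<in>W. (y v)\<^sup>2) > 0"
      by (simp add: less_le sum_nonneg)
    define c where "c = sqrt (\<Sum>v\<in>W. (y v)\<^sup>2)"
    have c2: "c\<^sup>2 = (\<Sum>v\<in>W. (y v)\<^sup>2)" and "c > 0"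
      using pos unfolding c_def by auto
    have "(\<Sum>v\<in>W. (y v / c)\<^sup>2) = 1"
      using c2 pos by (simp add: power_divide flip: sum_divide_distrib)
    then have "quad_form W M (\<lambda>v. y v / c) \<le> lam"
      unfolding lam_def by (rule z_max)
    moreover have "quad_form W M (\<lambda>v. y v / c) = quad_form W M y / c\<^sup>2"
      unfolding quad_form_def by (simp add: sum_divide_distrib power2_eq_square)
    ultimately show ?thesis
      using pos c2 by (simp add: pos_divide_le_eq)
  qed
  have "\<exists>v\<in>W. z v \<noteq> 0"
  proof (rule ccontr)
    assume "\<not> (\<exists>v\<in>W. z v \<noteq> 0)"
    then have "(\<Sum>v\<in>W. (z v)\<^sup>2) = 0"
      by simp
    with unit show False
      by simp
  qed
  moreover have "\<forall>v\<in>W. (\<Sum>w\<in>W. M v w * z w) = lam * z v"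
    using quad_form_maximiser_eigenvector[OF fin _ sym bound] unit lam_def by simp
  ultimately have "is_eigenvalue W M lam"
    unfolding is_eigenvalue_def by blast
  then show thesis
    using bound by (rule that)
qed

lemma symmetric_quad_form_le_Max_eigenvalue:
  assumes "finite W" and "W \<noteq> {}"
    and "\<And>v w. v \<in> W \<Longrightarrow> w \<in> W \<Longrightarrow> M v w = M w v"
  shows "quad_form W M y \<le> Max {lam. is_eigenvalue W M lam} * (\<Sum>v\<in>W. (y v)\<^sup>2)"
proof -
  obtain lam where "is_eigenvalue W M lam"
    and bound: "\<And>y. quad_form W M y \<le> lam * (\<Sum>v\<in>W. (y v)\<^sup>2)"
    using symmetric_quad_form_le_eigenvalue[of W M, OF assms] by blast
  then have "lam \<le> Max {lam. is_eigenvalue W M lam}"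
    using finite_eigenvalues[OF \<open>finite W\<close>] by simp
  then have "lam * (\<Sum>v\<in>W. (y v)\<^sup>2) \<le> Max {lam. is_eigenvalue W M lam} * (\<Sum>v\<in>W. (y v)\<^sup>2)"
    by (intro mult_right_mono) (simp_all add: sum_nonneg)
  with bound[of y] show ?thesis
    by linarith
qed

lemma simple_graph_del_vertex:
  assumes "simple_graph V E"
  shows "simple_graph (del_vertex_V V u) (del_vertex_E E u)"
  using assms unfolding simple_graph_def del_vertex_V_def del_vertex_E_def by auto

lemma quad_form_le_q_index:
  assumes G: "simple_graph V E" and "V \<noteq> {}"
  shows "quad_form V (signless_laplacian V E) y \<le> q_index V E * (\<Sum>v\<in>V. (y v)\<^sup>2)"
  unfolding q_index_def
proof (rule symmetric_quad_form_le_Max_eigenvalue)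
  show "finite V"
    using G by (simp add: simple_graph_def)
  show "V \<noteq> {}"
    by fact
  show "signless_laplacian V E v w = signless_laplacian V E w v" for v w
    using G unfolding simple_graph_def signless_laplacian_def by auto
qed

lemma signless_laplacian_mult:
  assumes "finite V" and "v \<in> V"
  shows "(\<Sum>w\<in>V. signless_laplacian V E v w * x w)
    = real (Defs.degree V E v) * x v + (\<Sum>w\<in>{w\<in>V. E v w}. x w)"
proof -
  have "(\<Sum>w\<in>V. signless_laplacian V E v w * x w)
      = (\<Sum>w\<in>V. (if w = v then real (Defs.degree V E v) * x v else 0) + (if E v w then x w else 0))"
    unfolding signless_laplacian_def by (intro sum.cong) (auto simp: algebra_simps)
  then show ?thesis
    using assms by (simp add: sum.distrib sum.inter_filter)
qed

lemma quad_form_signless_laplacian: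
  assumes "finite V"
  shows "quad_form V (signless_laplacian V E) x
    = (\<Sum>v\<in>V. \<Sum>w\<in>V. if E v w then (x v)\<^sup>2 + x v * x w else 0)"
proof -
  have "quad_form V (signless_laplacian V E) x = (\<Sum>v\<in>V. x v * (\<Sum>w\<in>V. signless_laplacian V E v w * x w))"
    unfolding quad_form_def by (simp add: sum_distrib_left mult_ac)
  also have "\<dots> = (\<Sum>v\<in>V. x v * (real (Defs.degree V E v) * x v + (\<Sum>w\<in>{w\<in>V. E v w}. x w)))"
    using assms by (simp add: signless_laplacian_mult)
  also have "\<dots> = (\<Sum>v\<in>V. \<Sum>w\<in>{w\<in>V. E v w}. (x v)\<^sup>2 + x v * x w)"
    unfolding Defs.degree_def
    by (simp add: distrib_left sum.distrib sum_distrib_left power2_eq_square mult_ac)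
  also have "\<dots> = (\<Sum>v\<in>V. \<Sum>w\<in>V. if E v w then (x v)\<^sup>2 + x v * x w else 0)"
    by (simp only: sum.inter_filter[OF assms])
  finally show ?thesis .
qed

lemma quad_form_del_vertex:
  assumes G: "simple_graph V E" and u: "u \<in> V"
  shows "quad_form V (signless_laplacian V E) x
    = quad_form (del_vertex_V V u) (signless_laplacian (del_vertex_V V u) (del_vertex_E E u)) x
      + (\<Sum>w\<in>{w\<in>V. E u w}. (x u + x w)\<^sup>2)"
proof -
  define V' where "V' = V - {u}"
  define f where "f E v w = (if E v w then (x v)\<^sup>2 + x v * x w else 0)" for E and v w :: 'a
  have fin: "finite V" "finite V'"
    using G unfolding V'_def simple_graph_def by auto
  have E: "E v w \<Longrightarrow> E w v" "\<not> E u u" for v w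
    using G unfolding simple_graph_def by auto
  have "(\<Sum>v\<in>V. \<Sum>w\<in>V. f E v w)
      = (\<Sum>v\<in>V'. \<Sum>w\<in>V'. f E v w) + (\<Sum>w\<in>V'. f E u w + f E w u)"
    using fin u E(2) unfolding V'_def
    by (simp add: sum.remove[of V u] sum.distrib f_def algebra_simps)
  also have "(\<Sum>v\<in>V'. \<Sum>w\<in>V'. f E v w) = (\<Sum>v\<in>V'. \<Sum>w\<in>V'. f (del_vertex_E E u) v w)"
    unfolding V'_def f_def del_vertex_E_def by (intro sum.cong) auto
  also have "(\<Sum>w\<in>V'. f E u w + f E w u) = (\<Sum>w\<in>V'. if E u w then (x u + x w)\<^sup>2 else 0)"
    unfolding f_def using E(1) by (intro sum.cong) (auto simp: power2_sum algebra_simps)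
  also have "\<dots> = (\<Sum>w\<in>{w\<in>V. E u w}. (x u + x w)\<^sup>2)"
    using fin E(2) unfolding V'_def by (simp add: sum.inter_filter[symmetric]) (intro sum.cong; auto)
  finally show ?thesis
    unfolding del_vertex_V_def V'_def[symmetric] quad_form_signless_laplacian[OF fin(1)]
      quad_form_signless_laplacian[OF fin(2)]
    by (simp add: f_def)
qed

lemma sum_shifted_squares_le:
  fixes x :: "'a \<Rightarrow> real"
  assumes fin: "finite V" and N: "N \<subseteq> V"
    and min: "\<And>v. v \<in> V \<Longrightarrow> a\<^sup>2 \<le> (x v)\<^sup>2"
    and unit: "(\<Sum>v\<in>V. (x v)\<^sup>2) = 1"
    and eq: "real (card N) * a + (\<Sum>w\<in>N. x w) = q * a"
  shows "(\<Sum>w\<in>N. (a + x w)\<^sup>2) \<le> 2 * q * a\<^sup>2 + 1 - real (card V) * a\<^sup>2"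
proof -
  have finN: "finite N"
    using fin N finite_subset by blast
  have "(\<Sum>w\<in>N. (a + x w)\<^sup>2) = real (card N) * a\<^sup>2 + 2 * (a * (\<Sum>w\<in>N. x w)) + (\<Sum>w\<in>N. (x w)\<^sup>2)"
    by (simp add: power2_sum sum.distrib sum_distrib_left mult.assoc)
  also have "a * (\<Sum>w\<in>N. x w) = q * a\<^sup>2 - real (card N) * a\<^sup>2"
    using arg_cong[OF eq, of "(*) a"] by (simp add: algebra_simps power2_eq_square)
  also have "(\<Sum>w\<in>N. (x w)\<^sup>2) = 1 - (\<Sum>v\<in>V - N. (x v)\<^sup>2)"
    using sum.subset_diff[OF N fin, of "\<lambda>v. (x v)\<^sup>2"] unit by simp
  also have "real (card (V - N)) * a\<^sup>2 \<le> (\<Sum>v\<in>V - N. (x v)\<^sup>2)"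
    using sum_mono[of "V - N" "\<lambda>_. a\<^sup>2"] min by simp
  moreover have "real (card (V - N)) = real (card V) - real (card N)"
    using card_Diff_subset[OF finN N] card_mono[OF fin N] by simp
  ultimately show ?thesis
    by (simp add: algebra_simps)
qed

lemma rearrange_deletion_bound:
  fixes n b q l :: real
  assumes n: "n \<ge> 3" and b: "b \<ge> 0" "n * b \<le> 1"
    and key: "l * (1 - b) \<ge> q * (1 - 2 * b) - 1 + n * b"
  shows "l / (n - 2) \<ge> q / (n - 1) * (1 + (1 - n * b) / ((n - 2) * (1 - b)))
           - (1 - n * b) / ((n - 2) * (1 - b))"
proof -
  have "3 * b \<le> n * b"
    using n b by (intro mult_right_mono)
  then have b1: "1 - b > 0"
    using b by linarith
  have n2: "n - 2 > 0" "n - 1 > 0"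
    using n by auto
  have "1 + (1 - n * b) / ((n - 2) * (1 - b)) = (n - 1) * (1 - 2 * b) / ((n - 2) * (1 - b))"
    using b1 n2 by (simp add: divide_simps) (simp add: algebra_simps)
  then have "q / (n - 1) * (1 + (1 - n * b) / ((n - 2) * (1 - b))) - (1 - n * b) / ((n - 2) * (1 - b))
      = (q * (1 - 2 * b) - 1 + n * b) / ((n - 2) * (1 - b))"
    using b1 n2 by (simp add: divide_simps)
  also have "\<dots> \<le> l * (1 - b) / ((n - 2) * (1 - b))"
    using key b1 n2 by (intro divide_right_mono) auto
  also have "\<dots> = l / (n - 2)"
    using b1 by simp
  finally show ?thesis .
qed

lemma q_index_del_vertex_ge:
  fixes x :: "'a \<Rightarrow> real"
  assumes G: "simple_graph V E" and "card V \<ge> 2" and u: "u \<in> V"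
    and unit: "(\<Sum>v\<in>V. (x v)\<^sup>2) = 1"
    and eigen: "\<forall>v\<in>V. (\<Sum>w\<in>V. signless_laplacian V E v w * x w) = q * x v"
    and min: "\<And>v. v \<in> V \<Longrightarrow> (x u)\<^sup>2 \<le> (x v)\<^sup>2"
  shows "q_index (del_vertex_V V u) (del_vertex_E E u) * (1 - (x u)\<^sup>2)
    \<ge> q * (1 - 2 * (x u)\<^sup>2) - 1 + real (card V) * (x u)\<^sup>2"
proof -
  define V' E' where "V' = del_vertex_V V u" and "E' = del_vertex_E E u"
  have fin: "finite V"
    using G by (simp add: simple_graph_def)
  have "card V' = card V - 1"
    using fin u unfolding V'_def del_vertex_V_def by simp
  then have "V' \<noteq> {}"
    using \<open>card V \<ge> 2\<close> by auto
  have "(\<Sum>v\<in>V'. (x v)\<^sup>2) = 1 - (x u)\<^sup>2"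
    using sum.remove[OF fin u, of "\<lambda>v. (x v)\<^sup>2"] unit unfolding V'_def del_vertex_V_def by simp
  moreover have "simple_graph V' E'"
    unfolding V'_def E'_def by (rule simple_graph_del_vertex[OF G])
  ultimately have restricted: "quad_form V' (signless_laplacian V' E') x \<le> q_index V' E' * (1 - (x u)\<^sup>2)"
    using quad_form_le_q_index[of V' E' x] \<open>V' \<noteq> {}\<close> by simp
  have "real (card {w\<in>V. E u w}) * x u + (\<Sum>w\<in>{w\<in>V. E u w}. x w) = q * x u"
    using eigen u signless_laplacian_mult[OF fin u, of E x] unfolding Defs.degree_def by simp
  then have "(\<Sum>w\<in>{w\<in>V. E u w}. (x u + x w)\<^sup>2) \<le> 2 * q * (x u)\<^sup>2 + 1 - real (card V) * (x u)\<^sup>2"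
    by (intro sum_shifted_squares_le[OF fin _ min unit]) auto
  moreover have "quad_form V (signless_laplacian V E) x = q"
    using quad_form_eigenvector[OF eigen] unit by simp
  ultimately show ?thesis
    using quad_form_del_vertex[OF G u, of x] restricted unfolding V'_def E'_def
    by (simp add: algebra_simps)
qed

theorem lemma3p2:
  fixes V :: "'a set" and E :: "'a \<Rightarrow> 'a \<Rightarrow> bool" and x :: "'a \<Rightarrow> real" and u :: 'a
  assumes "simple_graph V E"
    and "card V \<ge> 3"
    and "\<forall>v\<in>V. x v \<ge> 0"
    and "(\<Sum>v\<in>V. (x v)\<^sup>2) = 1"
    and "\<forall>v\<in>V. (\<Sum>w\<in>V. signless_laplacian V E v w * x w) = q_index V E * x v"
    and "u \<in> V"
    and "x u = Min (x ` V)"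
  shows "q_index (del_vertex_V V u) (del_vertex_E E u) / (real (card V) - 2)
      \<ge> q_index V E / (real (card V) - 1)
          * (1 + (1 - real (card V) * (x u)\<^sup>2) / ((real (card V) - 2) * (1 - (x u)\<^sup>2)))
        - (1 - real (card V) * (x u)\<^sup>2) / ((real (card V) - 2) * (1 - (x u)\<^sup>2))"
proof -
  have "finite V"
    using assms(1) by (simp add: simple_graph_def)
  have "0 \<le> x u" and "x u \<le> x v" if "v \<in> V" for v
    using assms(3,6,7) \<open>finite V\<close> that by auto
  then have min: "(x u)\<^sup>2 \<le> (x v)\<^sup>2" if "v \<in> V" for v
    using that by (simp add: power_mono)
  then have "real (card V) * (x u)\<^sup>2 \<le> 1"
    using sum_mono[of V "\<lambda>_. (x u)\<^sup>2" "\<lambda>v. (x v)\<^sup>2"] assms(4) by simp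
  moreover have "q_index (del_vertex_V V u) (del_vertex_E E u) * (1 - (x u)\<^sup>2)
      \<ge> q_index V E * (1 - 2 * (x u)\<^sup>2) - 1 + real (card V) * (x u)\<^sup>2"
    using assms(2) by (intro q_index_del_vertex_ge[OF assms(1) _ assms(6,4,5) min]) auto
  ultimately show ?thesis
    using assms(2) by (intro rearrange_deletion_bound) auto
qed

end
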